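(* Let $\mathcal{A}$ be a finite nonempty set of positive integers, let $k\ge 1$ be an integer and let $k_1\ge k_2\ge 1$ be real numbers with $k+1>k_2$. Set $X=\max\mathcal{A}$, $z=X^{1/k_1}$, $y=X^{1/k_2}$ and $\lambda=k+1-k_2$. Suppose that for some constants $c>0$ and $0<\delta<1$, $$\sum_{\substack{p\text{ prime}\\ z\le p<y}}|\mathcal{A}_{p^2}|\le c|\mathcal{A}|^{1-\delta}.$$ Then $$r_k(\mathcal{A})\ge \frac{\lambda}{k}S(\mathcal{A},z)-\frac1k\sum_{\substack{p\text{ prime}\\ z\le p<y}}\left(1-\frac{\log p}{\log y}\right)S(\mathcal{A}_p,z)-\frac{\lambda c}{k}|\mathcal{A}|^{1-\delta}.$$
   Context: All $p$ denote primes. For a positive integer $d$ and a finite set $\mathcal{B}$ of positive integers, $\mathcal{B}_d=\{b\in\mathcal{B}: d\mid b\}$. $P(z)=\prod_{p<z}p$, and $S(\mathcal{B},z)=\#\{b\in\mathcal{B}:\gcd(b,P(z))=1\}$. $r_k(\mathcal{A})=\#\{a\in\mathcal{A}:\Omega(a)\le k\}$, where $\Omega(a)$ is the number of prime factors of $a$ counted with multiplicity. *)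

theory Defs
  imports "HOL-Analysis.Analysis" "HOL-Computational_Algebra.Primes"
begin

definition mult_sub :: "nat set \<Rightarrow> nat \<Rightarrow> nat set" where
  "mult_sub B d = {b \<in> B. d dvd b}"

definition primorial_lt :: "real \<Rightarrow> nat" where
  "primorial_lt z = (\<Prod>p\<in>{p::nat. prime p \<and> real p < z}. p)"

definition sift :: "nat set \<Rightarrow> real \<Rightarrow> nat" where
  "sift B z = card {b \<in> B. gcd b (primorial_lt z) = 1}"

definition bigOmega :: "nat \<Rightarrow> nat" where
  "bigOmega a = size (prime_factorization a)"

definition r_k :: "nat \<Rightarrow> nat set \<Rightarrow> nat" where
  "r_k k A = card {a \<in> A. bigOmega a \<le> k}"

end

theory Submission
  imports Defs
begin

text \<open>Kuhn's weighted sieve. Each \<open>a\<close> counted by \<open>S(A, z)\<close> gets the weight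
  \<open>\<lambda> - \<Sum> (1 - log p / log y)\<close>, summed over the primes \<open>z \<le> p < y\<close> dividing \<open>a\<close>; these
  weights add up to \<open>\<lambda> S(A, z) - \<Sum>\<^sub>p (1 - log p / log y) S(A\<^sub>p, z)\<close>. Every weight is at most
  \<open>\<lambda> \<le> k\<close>. If \<open>\<Omega>(a) > k\<close> and no \<open>p\<^sup>2\<close> with \<open>z \<le> p < y\<close> divides \<open>a\<close>, then, as all prime
  factors of \<open>a\<close> are at least \<open>z\<close> and \<open>a \<le> X = y\<^bsup>k2\<^esup>\<close>, the subtracted sum is at least
  \<open>\<Sum>\<^sub>p v\<^sub>p(a) (1 - log p / log y) = \<Omega>(a) - log a / log y \<ge> k + 1 - k2 = \<lambda>\<close>, so the weight is
  nonpositive. The remaining elements are charged \<open>\<lambda>\<close> for each such \<open>p\<^sup>2\<close>, and the hypothesis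
  bounds these charges in total by \<open>\<lambda> c |A|\<^bsup>1-\<delta>\<^esup>\<close>.\<close>

definition primes_between :: "real \<Rightarrow> real \<Rightarrow> nat set" where
  "primes_between z y = {p. prime p \<and> z \<le> real p \<and> real p < y}"

definition sifted :: "nat set \<Rightarrow> real \<Rightarrow> nat set" where
  "sifted B z = {b \<in> B. gcd b (primorial_lt z) = 1}"

definition log_weight :: "real \<Rightarrow> nat \<Rightarrow> real" where
  "log_weight y p = 1 - ln (real p) / ln y"

lemma sift_eq_card_sifted: "sift B z = card (sifted B z)"
  unfolding sift_def sifted_def ..

lemma sifted_mult_sub: "sifted (mult_sub B d) z = {b \<in> sifted B z. d dvd b}"
  unfolding sifted_def mult_sub_def by auto

lemma finite_nat_less_real: "finite {n::nat. real n < y}"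
  by (rule finite_subset[of _ "{..<nat \<lceil>y\<rceil>}"]) (auto, linarith)

lemma finite_primes_between: "finite (primes_between z y)"
  unfolding primes_between_def by (auto intro: finite_subset[OF _ finite_nat_less_real])

lemma prime_factor_ge_if_mem_sifted:
  assumes "b \<in> sifted B z" "prime p" "p dvd b"
  shows "z \<le> real p"
proof (rule ccontr)
  assume "\<not> z \<le> real p"
  with assms(2) have "p dvd primorial_lt z"
    unfolding primorial_lt_def
    by (intro dvd_prodI) (auto intro: finite_subset[OF _ finite_nat_less_real])
  with assms(3) have "p dvd gcd b (primorial_lt z)" by simp
  with assms(1,2) show False unfolding sifted_def by auto
qed

lemma sum_filter_swap:
  assumes "finite A" "finite P"
  shows "(\<Sum>a\<in>A. \<Sum>p\<in>{p\<in>P. R a p}. g p) = (\<Sum>p\<in>P. g p * real (card {a\<in>A. R a p}))"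
proof -
  have "(\<Sum>a\<in>A. \<Sum>p\<in>{p\<in>P. R a p}. g p) = (\<Sum>p\<in>P. \<Sum>a\<in>A. if R a p then g p else 0)"
    using assms by (simp add: sum.inter_filter sum.swap[of _ A])
  also have "\<dots> = (\<Sum>p\<in>P. g p * real (card {a\<in>A. R a p}))"
    using assms by (simp add: sum.inter_filter[symmetric] mult.commute)
  finally show ?thesis .
qed

lemma bigOmega_eq_sum_multiplicity:
  "a > 0 \<Longrightarrow> bigOmega a = (\<Sum>p\<in>prime_factors a. multiplicity p a)"
  unfolding bigOmega_def size_multiset_overloaded_eq
  by (intro sum.cong refl) (simp add: count_prime_factorization_prime in_prime_factors_imp_prime)

lemma ln_eq_sum_multiplicity:
  assumes "(a::nat) > 0"
  shows "ln (real a) = (\<Sum>p\<in>prime_factors a. real (multiplicity p a) * ln (real p))"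
proof -
  have "ln (real a) = ln (\<Prod>p\<in>prime_factors a. real p ^ multiplicity p a)"
    by (subst prime_factorization_nat[OF assms]) simp
  also have "\<dots> = (\<Sum>p\<in>prime_factors a. ln (real p ^ multiplicity p a))"
    by (rule ln_prod) (auto dest: in_prime_factors_imp_prime prime_gt_0_nat)
  finally show ?thesis
    by (auto intro!: sum.cong simp: ln_realpow dest: in_prime_factors_imp_prime prime_gt_0_nat)
qed

lemma bigOmega_minus_log_ratio:
  assumes "(a::nat) > 0"
  shows "real (bigOmega a) - ln (real a) / ln y
    = (\<Sum>p\<in>prime_factors a. real (multiplicity p a) * log_weight y p)"
  using assms
  by (simp add: log_weight_def bigOmega_eq_sum_multiplicity ln_eq_sum_multiplicity
      right_diff_distrib sum_subtractf sum_divide_distrib)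

lemma bigOmega_minus_log_ratio_le:
  assumes "(a::nat) > 0" "y > 1"
    and squarefree_below: "\<And>p. p \<in> prime_factors a \<Longrightarrow> real p < y \<Longrightarrow> \<not> p\<^sup>2 dvd a"
  shows "real (bigOmega a) - ln (real a) / ln y
    \<le> (\<Sum>p\<in>{p\<in>prime_factors a. real p < y}. log_weight y p)"
proof -
  have "real (multiplicity p a) * log_weight y p \<le> (if real p < y then log_weight y p else 0)"
    if p: "p \<in> prime_factors a" for p
  proof (cases "real p < y")
    case True
    with p squarefree_below have "multiplicity p a = 1"
      by (intro multiplicity_eqI) (auto simp: power2_eq_square)
    with True show ?thesis by simp
  next
    case False
    with \<open>y > 1\<close> have "ln y \<le> ln (real p)" by simp
    with \<open>y > 1\<close> have "log_weight y p \<le> 0" by (simp add: log_weight_def field_simps)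
    with False show ?thesis by (simp add: mult_nonneg_nonpos)
  qed
  then have "(\<Sum>p\<in>prime_factors a. real (multiplicity p a) * log_weight y p)
      \<le> (\<Sum>p\<in>prime_factors a. if real p < y then log_weight y p else 0)"
    by (rule sum_mono)
  then show ?thesis
    by (simp add: bigOmega_minus_log_ratio[OF \<open>a > 0\<close>] sum.inter_filter)
qed

lemma log_weight_nonneg:
  assumes "prime p" "real p < y"
  shows "0 \<le> log_weight y p"
proof -
  have "1 < real p" using prime_gt_1_nat[OF assms(1)] by simp
  with assms(2) have "0 < ln (real p)" "ln (real p) < ln y" by auto
  then show ?thesis unfolding log_weight_def by (simp add: field_simps)
qed

lemma sieve_weight_le:
  fixes a k :: nat and k2 y z :: real
  defines "lam \<equiv> real k + 1 - k2"
  assumes "a > 0" "y > 0" and a_le: "real a \<le> y powr k2" and "1 \<le> k2" "k2 < real k + 1"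
    and large_factors: "\<And>p. prime p \<Longrightarrow> p dvd a \<Longrightarrow> z \<le> real p"
  shows "lam - (\<Sum>p\<in>{p\<in>primes_between z y. p dvd a}. log_weight y p)
    \<le> real k * (if bigOmega a \<le> k then 1 else 0)
      + lam * real (card {p\<in>primes_between z y. p\<^sup>2 dvd a})"
proof -
  let ?P = "primes_between z y"
  have weight_le: "lam - (\<Sum>p\<in>{p\<in>?P. p dvd a}. log_weight y p) \<le> lam"
    by (auto intro!: sum_nonneg log_weight_nonneg simp: primes_between_def)
  have lam_nonneg: "0 \<le> lam" using \<open>k2 < real k + 1\<close> unfolding lam_def by simp
  consider (square) "\<exists>p\<in>?P. p\<^sup>2 dvd a" | (few) "bigOmega a \<le> k"
    | (many) "\<forall>p\<in>?P. \<not> p\<^sup>2 dvd a" "k < bigOmega a" by (meson not_le)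
  then show ?thesis
  proof cases
    case square
    then have "1 \<le> card {p\<in>?P. p\<^sup>2 dvd a}"
      using finite_primes_between by (auto simp: Suc_le_eq card_gt_0_iff)
    with lam_nonneg have "lam \<le> lam * real (card {p\<in>?P. p\<^sup>2 dvd a})"
      using mult_left_mono[of 1 "real (card {p\<in>?P. p\<^sup>2 dvd a})" lam] by simp
    with weight_le show ?thesis by simp
  next
    case few
    then have "real k * (if bigOmega a \<le> k then 1 else 0) = real k" by simp
    moreover have "lam \<le> real k" using \<open>1 \<le> k2\<close> unfolding lam_def by simp
    moreover have "0 \<le> lam * real (card {p\<in>?P. p\<^sup>2 dvd a})" using lam_nonneg by simp
    ultimately show ?thesis using weight_le by linarith
  next
    case many
    then have "a \<noteq> 1" by (auto simp: bigOmega_def)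
    with \<open>a > 0\<close> have "0 < ln (real a)" by simp
    moreover have ln_a: "ln (real a) \<le> k2 * ln y"
    proof -
      have "ln (real a) \<le> ln (y powr k2)"
        using \<open>a > 0\<close> \<open>y > 0\<close> a_le by (subst ln_le_cancel_iff) auto
      also have "\<dots> = k2 * ln y" using \<open>y > 0\<close> by (simp add: ln_powr)
      finally show ?thesis .
    qed
    ultimately have "0 < k2 * ln y" by linarith
    then have "0 < ln y" using \<open>1 \<le> k2\<close> by (simp add: zero_less_mult_iff)
    then have "y > 1" using \<open>y > 0\<close> by (simp add: ln_gt_zero_iff)
    have divisors: "{p\<in>?P. p dvd a} = {p\<in>prime_factors a. real p < y}"
      using \<open>a > 0\<close> large_factors by (auto simp: primes_between_def in_prime_factors_iff)
    have "real (bigOmega a) - ln (real a) / ln y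
        \<le> (\<Sum>p\<in>{p\<in>?P. p dvd a}. log_weight y p)"
      unfolding divisors using many \<open>a > 0\<close> \<open>y > 1\<close> large_factors
      by (intro bigOmega_minus_log_ratio_le) (auto simp: primes_between_def in_prime_factors_iff)
    moreover have "ln (real a) / ln y \<le> k2"
      using ln_a \<open>0 < ln y\<close> by (simp add: divide_le_eq)
    moreover have "real k + 1 \<le> real (bigOmega a)" using many by simp
    ultimately have "lam \<le> (\<Sum>p\<in>{p\<in>?P. p dvd a}. log_weight y p)"
      unfolding lam_def by linarith
    moreover have "card {p\<in>?P. p\<^sup>2 dvd a} = 0" using many by (auto simp: card_eq_0_iff)
    moreover have "real k * (if bigOmega a \<le> k then 1 else 0) = 0" using many by simp
    ultimately show ?thesis by simp
  qed
qed

lemma weighted_sieve_inequality: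
  fixes A :: "nat set" and k :: nat and k2 y z :: real
  defines "lam \<equiv> real k + 1 - k2"
  assumes "finite A" "\<forall>a\<in>A. 0 < a" "\<forall>a\<in>A. real a \<le> y powr k2" "y > 0" "1 \<le> k2" "k2 < real k + 1"
  shows "lam * real (sift A z)
      - (\<Sum>p\<in>primes_between z y. log_weight y p * real (sift (mult_sub A p) z))
    \<le> real k * real (r_k k A) + lam * (\<Sum>p\<in>primes_between z y. real (card (mult_sub A (p\<^sup>2))))"
proof -
  let ?P = "primes_between z y" and ?S = "sifted A z"
  define R where "R a = real k * (if bigOmega a \<le> k then 1 else 0)
    + lam * real (card {p\<in>?P. p\<^sup>2 dvd a})" for a
  have "?S \<subseteq> A" unfolding sifted_def by auto
  then have "finite ?S" using \<open>finite A\<close> by (rule finite_subset)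
  have "lam * real (sift A z)
      - (\<Sum>p\<in>?P. log_weight y p * real (sift (mult_sub A p) z))
      = (\<Sum>a\<in>?S. lam - (\<Sum>p\<in>{p\<in>?P. p dvd a}. log_weight y p))"
    using sum_filter_swap[OF \<open>finite ?S\<close> finite_primes_between[of z y], where R = "\<lambda>a p. p dvd a"]
    by (simp add: sum_subtractf sift_eq_card_sifted sifted_mult_sub)
  also have "\<dots> \<le> (\<Sum>a\<in>?S. R a)"
    unfolding R_def lam_def using \<open>?S \<subseteq> A\<close> assms(3-7)
    by (intro sum_mono sieve_weight_le prime_factor_ge_if_mem_sifted) auto
  also have "\<dots> \<le> (\<Sum>a\<in>A. R a)"
    using \<open>finite A\<close> \<open>?S \<subseteq> A\<close> \<open>k2 < real k + 1\<close> unfolding R_def lam_def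
    by (intro sum_mono2) auto
  also have "\<dots> = real k * real (r_k k A)
      + lam * (\<Sum>p\<in>?P. real (card (mult_sub A (p\<^sup>2))))"
  proof -
    have "(\<Sum>a\<in>A. if bigOmega a \<le> k then 1 else 0) = real (r_k k A)"
      using \<open>finite A\<close> by (simp add: r_k_def sum.inter_filter[symmetric])
    moreover have "(\<Sum>a\<in>A. real (card {p\<in>?P. p\<^sup>2 dvd a}))
        = (\<Sum>p\<in>?P. real (card (mult_sub A (p\<^sup>2))))"
      using sum_filter_swap[OF \<open>finite A\<close> finite_primes_between[of z y],
          where R = "\<lambda>a p. p\<^sup>2 dvd a" and g = "\<lambda>_. 1"]
      by (simp add: mult_sub_def)
    ultimately show ?thesis
      by (simp add: R_def sum.distrib sum_distrib_left[symmetric])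
  qed
  finally show ?thesis .
qed

theorem lemma3p6:
  fixes A :: "nat set" and k :: nat and k1 k2 c \<delta> :: real
  assumes "finite A" "A \<noteq> {}" "\<forall>a\<in>A. a > 0"
    and "k \<ge> 1" "k1 \<ge> k2" "k2 \<ge> 1" "real k + 1 > k2"
    and "c > 0" "0 < \<delta>" "\<delta> < 1"
    and "(\<Sum>p\<in>{p::nat. prime p \<and> real (Max A) powr (1/k1) \<le> real p \<and> real p < real (Max A) powr (1/k2)}.
            real (card (mult_sub A (p^2)))) \<le> c * real (card A) powr (1 - \<delta>)"
  shows "let X = Max A; z = real X powr (1/k1); y = real X powr (1/k2); lam = real k + 1 - k2 in
    real (r_k k A) \<ge> lam / real k * real (sift A z)
      - 1 / real k * (\<Sum>p\<in>{p::nat. prime p \<and> z \<le> real p \<and> real p < y}.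
                          (1 - ln (real p) / ln y) * real (sift (mult_sub A p) z))
      - lam * c / real k * real (card A) powr (1 - \<delta>)"
proof -
  define X where "X = Max A"
  define z where "z = real X powr (1/k1)"
  define y where "y = real X powr (1/k2)"
  define lam where "lam = real k + 1 - k2"
  define N where "N = real (card A) powr (1 - \<delta>)"
  define W where "W = (\<Sum>p\<in>primes_between z y. log_weight y p * real (sift (mult_sub A p) z))"
  have "X \<in> A" unfolding X_def using assms(1,2) by simp
  then have "0 < X" using assms(3) by simp
  have y_pos: "y > 0" unfolding y_def using \<open>0 < X\<close> by simp
  have "y powr k2 = real X" unfolding y_def using \<open>0 < X\<close> assms(6) by (simp add: powr_powr)
  then have below_y: "\<forall>a\<in>A. real a \<le> y powr k2" unfolding X_def using assms(1) by simp
  have "lam * real (sift A z) - W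
      \<le> real k * real (r_k k A) + lam * (\<Sum>p\<in>primes_between z y. real (card (mult_sub A (p\<^sup>2))))"
    unfolding lam_def W_def using weighted_sieve_inequality[OF assms(1,3) below_y y_pos assms(6,7)] .
  moreover have "lam * (\<Sum>p\<in>primes_between z y. real (card (mult_sub A (p\<^sup>2)))) \<le> lam * (c * N)"
    using assms(7,11) unfolding lam_def N_def X_def y_def z_def primes_between_def
    by (intro mult_left_mono) auto
  ultimately have "lam * real (sift A z) - W - lam * (c * N) \<le> real k * real (r_k k A)"
    by linarith
  then have "(lam * real (sift A z) - W - lam * (c * N)) / real k \<le> real k * real (r_k k A) / real k"
    by (rule divide_right_mono) simp
  then have "(lam * real (sift A z) - W - lam * (c * N)) / real k \<le> real (r_k k A)"
    using assms(4) by simp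
  then have "lam / real k * real (sift A z) - 1 / real k * W - lam * c / real k * N \<le> real (r_k k A)"
    by (simp add: diff_divide_distrib)
  then show ?thesis
    unfolding Let_def X_def[symmetric] z_def[symmetric] y_def[symmetric] lam_def[symmetric]
      N_def[symmetric] W_def log_weight_def primes_between_def .
qed

end
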